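(* Let $G$ be a loopless multigraph and $k\ge 1$ an integer with $k \geq \Delta^{\mu}(G)-1$. If $G^*$ has no cycle of length greater than $2$ (equivalently, merging parallel edges of $G^*$ yields a forest), then $G$ is $k$-edge-colorable.
   Context: $d(v)$ is the degree of $v$ in $G$ (counting multiplicities), $\mu(v,w)$ is the number of edges joining $v,w$, $\mu(v)=\max_w \mu(v,w)$, and $\Delta^{\mu}(G)=\max_{v\in V(G)}[d(v)+\mu(v)]$. $G^*$ is the subgraph of $G$ induced by all vertices $v$ with $d(v)+\mu(v)=\Delta^{\mu}(G)$. $k$-edge-colorable means there is an assignment of colors from $\{1,\dots,k\}$ to edges so that distinct edges sharing an endpoint get distinct colors. *)

theory Defs
  imports Main
begin

text \<open>Parallel edges are distinct edge identifiers with the same endpoint set.\<close>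
definition loopless_multigraph :: "'v set \<Rightarrow> 'e set \<Rightarrow> ('e \<Rightarrow> 'v set) \<Rightarrow> bool" where
  "loopless_multigraph V E ends \<longleftrightarrow> finite V \<and> finite E \<and>
     (\<forall>e\<in>E. ends e \<subseteq> V \<and> card (ends e) = 2)"

definition mg_degree :: "'e set \<Rightarrow> ('e \<Rightarrow> 'v set) \<Rightarrow> 'v \<Rightarrow> nat" where
  "mg_degree E ends v = card {e\<in>E. v \<in> ends e}"

definition mg_mult :: "'e set \<Rightarrow> ('e \<Rightarrow> 'v set) \<Rightarrow> 'v \<Rightarrow> 'v \<Rightarrow> nat" where
  "mg_mult E ends v w = card {e\<in>E. ends e = {v, w}}"

definition mg_mu :: "'v set \<Rightarrow> 'e set \<Rightarrow> ('e \<Rightarrow> 'v set) \<Rightarrow> 'v \<Rightarrow> nat" where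
  "mg_mu V E ends v = Max (insert 0 {mg_mult E ends v w | w. w \<in> V})"

definition mg_Delta_mu :: "'v set \<Rightarrow> 'e set \<Rightarrow> ('e \<Rightarrow> 'v set) \<Rightarrow> nat" where
  "mg_Delta_mu V E ends = Max (insert 0 {mg_degree E ends v + mg_mu V E ends v | v. v \<in> V})"

text \<open>vertex set of G^*; G^* is the subgraph induced by these vertices\<close>
definition mg_star_vertices :: "'v set \<Rightarrow> 'e set \<Rightarrow> ('e \<Rightarrow> 'v set) \<Rightarrow> 'v set" where
  "mg_star_vertices V E ends =
     {v\<in>V. mg_degree E ends v + mg_mu V E ends v = mg_Delta_mu V E ends}"

text \<open>A cycle of length n >= 3 in the subgraph induced by S: n distinct vertices of S,
  cyclically consecutive ones joined by an edge. (Cycles of length 2 are pairs of parallel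
  edges; the hypothesis only excludes cycles of length > 2.)\<close>
definition has_long_cycle_in :: "'v set \<Rightarrow> 'e set \<Rightarrow> ('e \<Rightarrow> 'v set) \<Rightarrow> bool" where
  "has_long_cycle_in S E ends \<longleftrightarrow>
     (\<exists>vs. length vs \<ge> 3 \<and> distinct vs \<and> set vs \<subseteq> S \<and>
        (\<forall>i < length vs. mg_mult E ends (vs ! i) (vs ! ((i + 1) mod length vs)) > 0))"

definition k_edge_colorable :: "nat \<Rightarrow> 'e set \<Rightarrow> ('e \<Rightarrow> 'v set) \<Rightarrow> bool" where
  "k_edge_colorable k E ends \<longleftrightarrow>
     (\<exists>c :: 'e \<Rightarrow> nat. (\<forall>e\<in>E. c e \<in> {1..k}) \<and>
        (\<forall>e\<in>E. \<forall>f\<in>E. e \<noteq> f \<and> ends e \<inter> ends f \<noteq> {} \<longrightarrow> c e \<noteq> c f))"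

end

theory Submission
  imports Defs
begin

text \<open>Induction on the number of edges, under the hypothesis that \<open>\<Delta>\<^sup>\<mu> \<le> k\<close>, or
  \<open>\<Delta>\<^sup>\<mu> = k + 1\<close> and \<open>G\<^sup>*\<close> is a forest; this hypothesis passes to subgraphs. Choose a
  vertex \<open>x\<close>: any non-isolated vertex if \<open>\<Delta>\<^sup>\<mu> \<le> k\<close>, a leaf of the forest \<open>G\<^sup>*\<close> otherwise.
  Then \<open>d(x) \<le> k\<close>, every neighbour \<open>w\<close> has \<open>\<sigma>(w) = d(w) + \<mu>(x,w) \<le> k + 1\<close>, and at most
  one neighbour has \<open>\<sigma>(w) = k + 1\<close> (in the second case such neighbours lie in \<open>G\<^sup>*\<close>,
  where \<open>x\<close> has at most one neighbour).

  Colour \<open>G - x\<close> by induction. Under these conditions the colouring extends to the edges at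
  \<open>x\<close>: counting missing colours, and performing at most one Kempe change, one finds a
  neighbour \<open>z\<close> and a colour \<open>\<alpha>\<close> missing at \<open>z\<close> such that after giving one edge \<open>xz\<close> the colour
  \<open>\<alpha>\<close> and deleting all edges of colour \<open>\<alpha>\<close>, the same conditions hold with \<open>k - 1\<close> colours.
  Induction on \<open>d(x)\<close> finishes the extension.\<close>

section \<open>Paths in graphs of maximum degree two\<close>

lemma rtranclp_imp_distinct_path:
  assumes "R\<^sup>*\<^sup>* a b"
  shows "\<exists>p. successively R p \<and> distinct p \<and> p \<noteq> [] \<and> hd p = a \<and> last p = b"
  using assms
proof (induction rule: rtranclp_induct)
  case base
  show ?case by (intro exI[of _ "[a]"]) auto
next
  case (step y z)
  then obtain p where p: "successively R p" "distinct p" "p \<noteq> []" "hd p = a" "last p = y"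
    by blast
  show ?case
  proof (cases "z \<in> set p")
    case True
    then obtain xs ys where p_split: "p = xs @ z # ys" by (meson split_list)
    then have "successively R (xs @ [z])"
      using p(1) by (simp add: successively_append_iff)
    moreover have "hd (xs @ [z]) = a" using p(4) p_split by (cases xs) auto
    ultimately show ?thesis using p(2) p_split by (intro exI[of _ "xs @ [z]"]) auto
  next
    case False
    with p step(2) show ?thesis
      by (intro exI[of _ "p @ [z]"]) (auto simp: successively_append_iff hd_append)
  qed
qed

lemma successively_inner_nbrs:
  assumes sym: "\<And>u v. R u v \<Longrightarrow> R v u"
    and finite_nbrs: "\<And>v. finite {u. R v u}" and degree_le_2: "\<And>v. card {u. R v u} \<le> 2"
    and "successively R p" "distinct p" "0 < i" "Suc i < length p"
  shows "{u. R (p ! i) u} = {p ! (i - 1), p ! Suc i}"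
proof -
  have "R (p ! (i - 1)) (p ! i)" "R (p ! i) (p ! Suc i)"
    using successively_nth[OF assms(4), of "i - 1"] successively_nth[OF assms(4), of i] assms(6,7)
    by simp_all
  then have sub: "{p ! (i - 1), p ! Suc i} \<subseteq> {u. R (p ! i) u}" using sym by blast
  have "p ! (i - 1) \<noteq> p ! Suc i"
    using assms(5-7) nth_eq_iff_index_eq[of p "i - 1" "Suc i"] by simp
  then have "card {p ! (i - 1), p ! Suc i} = 2" by simp
  then show ?thesis using card_seteq[OF finite_nbrs sub] degree_le_2 by simp
qed

lemma rtranclp_from_path_end_in_path:
  assumes sym: "\<And>u v. R u v \<Longrightarrow> R v u"
    and finite_nbrs: "\<And>v. finite {u. R v u}" and degree_le_2: "\<And>v. card {u. R v u} \<le> 2"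
    and p: "successively R p" "distinct p" "2 \<le> length p"
    and ends: "card {u. R (hd p) u} \<le> 1" "card {u. R (last p) u} \<le> 1"
    and "R\<^sup>*\<^sup>* (hd p) c"
  shows "c \<in> set p"
proof -
  define n where "n = length p"
  have "p \<noteq> []" using p(3) by auto
  then have p_first: "p ! 0 = hd p" and p_last: "p ! (n - 1) = last p"
    by (simp_all add: hd_conv_nth last_conv_nth n_def)
  have step: "R (p ! i) (p ! Suc i)" if "Suc i < n" for i
    using successively_nth[OF p(1)] that n_def by blast
  have unique_nbr: "u = u'" if "card {u. R v u} \<le> 1" "R v u" "R v u'" for v u u'
    using that card_le_Suc0_iff_eq[OF finite_nbrs] by auto
  have closed: "u \<in> set p" if "i < n" "R (p ! i) u" for i u
  proof -
    consider "i = 0" | "i = n - 1" | "0 < i" "Suc i < n" using \<open>i < n\<close> by linarith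
    then show ?thesis
    proof cases
      case 1
      then have "u = p ! 1"
        using unique_nbr[OF ends(1)] step[of 0] that(2) p(3) p_first n_def by auto
      then show ?thesis using p(3) n_def by simp
    next
      case 2
      have "R (last p) (p ! (n - 2))"
        using step[of "n - 2"] sym p(3) p_last n_def by (simp add: Suc_diff_Suc numeral_2_eq_2)
      moreover have "R (last p) u" using that(2) 2 p_last by simp
      ultimately have "u = p ! (n - 2)" using unique_nbr[OF ends(2)] by blast
      then show ?thesis using p(3) n_def by simp
    next
      case 3
      then have "u = p ! (i - 1) \<or> u = p ! Suc i"
        using successively_inner_nbrs[OF sym finite_nbrs degree_le_2 p(1,2)] that(2) n_def by blast
      then show ?thesis using 3 n_def by auto
    qed
  qed
  show ?thesis using \<open>R\<^sup>*\<^sup>* (hd p) c\<close>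
  proof (induction rule: rtranclp_induct)
    case base
    show ?case using hd_in_set[OF \<open>p \<noteq> []\<close>] .
  next
    case (step y z)
    then show ?case using closed n_def by (metis in_set_conv_nth)
  qed
qed

text \<open>A component of maximum degree two is a path or a cycle.\<close>
lemma max_degree_two_component_at_most_two_ends:
  assumes sym: "\<And>u v. R u v \<Longrightarrow> R v u"
    and finite_nbrs: "\<And>v. finite {u. R v u}" and degree_le_2: "\<And>v. card {u. R v u} \<le> 2"
    and "R\<^sup>*\<^sup>* a b" and "R\<^sup>*\<^sup>* a c"
    and distinct: "a \<noteq> b" "a \<noteq> c" "b \<noteq> c"
    and ends: "card {u. R a u} \<le> 1" "card {u. R b u} \<le> 1" "card {u. R c u} \<le> 1"
  shows False
proof -
  obtain p where p: "successively R p" "distinct p" "p \<noteq> []" "hd p = a" "last p = b"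
    using rtranclp_imp_distinct_path[OF \<open>R\<^sup>*\<^sup>* a b\<close>] by blast
  have p_first: "p ! 0 = a" and p_last: "p ! (length p - 1) = b"
    using p by (simp_all add: hd_conv_nth last_conv_nth)
  have "length p \<noteq> 1" using p_first p_last distinct by auto
  moreover have "length p \<noteq> 0" using p(3) by simp
  ultimately have "2 \<le> length p" by linarith
  then have "c \<in> set p"
    using rtranclp_from_path_end_in_path[OF sym finite_nbrs degree_le_2 p(1,2)] ends(1,2)
      \<open>R\<^sup>*\<^sup>* a c\<close> p(4,5) by blast
  then obtain j where j: "j < length p" "p ! j = c" by (metis in_set_conv_nth)
  have "j \<noteq> 0" using j(2) p_first distinct(2) by metis
  moreover have "j \<noteq> length p - 1" using j(2) p_last distinct(3) by metis
  ultimately have "0 < j" "Suc j < length p" using j(1) by linarith+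
  then have "card {u. R c u} = 2"
    using successively_inner_nbrs[OF sym finite_nbrs degree_le_2 p(1,2)] j(2) p(2)
      nth_eq_iff_index_eq[of p "j - 1" "Suc j"] by auto
  then show False using ends(3) by simp
qed

section \<open>Degrees, multiplicities and matchings\<close>

lemma card_2_obtain_other:
  assumes "card S = 2" "v \<in> S"
  obtains u where "S = {v, u}" "u \<noteq> v"
  using assms by (auto simp: card_2_iff)

lemma two_le_card_if_not_singleton:
  assumes "finite S" "S \<noteq> {}" "\<And>z. S \<noteq> {z}"
  shows "2 \<le> card S"
proof -
  obtain a where "a \<in> S" using assms(2) by blast
  then obtain b where "b \<in> S" "b \<noteq> a" using assms(3)[of a] by blast
  then have "card {a, b} \<le> card S" using \<open>a \<in> S\<close> assms(1) by (intro card_mono) auto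
  then show ?thesis using \<open>b \<noteq> a\<close> by simp
qed

lemma mg_mult_commute: "mg_mult F ends u v = mg_mult F ends v u"
  unfolding mg_mult_def by (simp add: insert_commute)

lemma mg_mult_posI: "finite F \<Longrightarrow> e \<in> F \<Longrightarrow> ends e = {v, w} \<Longrightarrow> 0 < mg_mult F ends v w"
  unfolding mg_mult_def by (rule card_gt_0_iff[THEN iffD2]) auto

lemma mg_mult_posE:
  assumes "0 < mg_mult F ends v w"
  obtains e where "e \<in> F" "ends e = {v, w}"
proof -
  have "{e\<in>F. ends e = {v, w}} \<noteq> {}"
    using assms unfolding mg_mult_def by (rule card_gt_0_iff[THEN iffD1, THEN conjunct1])
  then show ?thesis using that by blast
qed

lemma mg_mult_self:
  assumes "\<forall>e\<in>F. card (ends e) = 2"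
  shows "mg_mult F ends v v = 0"
proof -
  have "ends e \<noteq> {v}" if "e \<in> F" for e using assms that by fastforce
  then have "{e\<in>F. ends e = {v, v}} = {}" by blast
  then show ?thesis unfolding mg_mult_def by (simp only: card.empty)
qed

lemma mg_mult_le_degree: "finite F \<Longrightarrow> mg_mult F ends v w \<le> mg_degree F ends v"
  unfolding mg_mult_def mg_degree_def by (rule card_mono) auto

lemma mg_mult_mono: "F' \<subseteq> F \<Longrightarrow> finite F \<Longrightarrow> mg_mult F' ends v w \<le> mg_mult F ends v w"
  unfolding mg_mult_def by (rule card_mono) auto

lemma mg_degree_mono: "F' \<subseteq> F \<Longrightarrow> finite F \<Longrightarrow> mg_degree F' ends v \<le> mg_degree F ends v"
  unfolding mg_degree_def by (rule card_mono) auto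

lemma mg_degree_pos_imp_nbr:
  assumes "finite F" "\<forall>e\<in>F. card (ends e) = 2" "0 < mg_degree F ends x"
  obtains w where "0 < mg_mult F ends x w"
proof -
  have "{e\<in>F. x \<in> ends e} \<noteq> {}"
    using assms(3) unfolding mg_degree_def by (rule card_gt_0_iff[THEN iffD1, THEN conjunct1])
  then obtain e where e: "e \<in> F" "x \<in> ends e" by blast
  obtain w where "ends e = {x, w}" using card_2_obtain_other[of "ends e" x] assms(2) e by blast
  then show ?thesis by (rule that[OF mg_mult_posI[OF assms(1) e(1)]])
qed

lemma finite_mg_nbrs:
  assumes "finite F" "\<forall>e\<in>F. card (ends e) = 2"
  shows "finite {w. 0 < mg_mult F ends x w}"
proof (rule finite_subset)
  show "{w. 0 < mg_mult F ends x w} \<subseteq> \<Union> (ends ` F)"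
  proof
    fix w assume "w \<in> {w. 0 < mg_mult F ends x w}"
    then have "0 < mg_mult F ends x w" by simp
    then obtain e where "e \<in> F" "ends e = {x, w}" by (rule mg_mult_posE)
    then show "w \<in> \<Union> (ends ` F)" by blast
  qed
  have "finite (ends e)" if "e \<in> F" for e using assms(2) that card.infinite by fastforce
  then show "finite (\<Union> (ends ` F))" using assms(1) by (intro finite_UN_I)
qed

lemma mg_nbr_neq:
  assumes "\<forall>e\<in>F. card (ends e) = 2" "0 < mg_mult F ends x w"
  shows "w \<noteq> x"
proof
  assume "w = x"
  then show False using mg_mult_self[OF assms(1)] assms(2) by simp
qed

lemma sum_mg_mult_le_degree:
  assumes "finite F"
  shows "(\<Sum>w\<in>T. mg_mult F ends x w) \<le> mg_degree F ends x"
proof (cases "finite T")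
  case True
  have "(\<Sum>w\<in>T. mg_mult F ends x w) = card (\<Union>w\<in>T. {e\<in>F. ends e = {x, w}})"
    unfolding mg_mult_def using True \<open>finite F\<close>
    by (intro card_UN_disjoint[symmetric]) (auto simp: doubleton_eq_iff)
  also have "\<dots> \<le> mg_degree F ends x"
    unfolding mg_degree_def using \<open>finite F\<close> by (intro card_mono) auto
  finally show ?thesis .
qed simp

abbreviation edges_avoiding :: "'e set \<Rightarrow> ('e \<Rightarrow> 'v set) \<Rightarrow> 'v \<Rightarrow> 'e set" where
  "edges_avoiding F ends x \<equiv> {e\<in>F. x \<notin> ends e}"

lemma mg_degree_split:
  assumes "finite F" "\<forall>e\<in>F. card (ends e) = 2" "w \<noteq> x"
  shows "mg_degree F ends w = mg_degree (edges_avoiding F ends x) ends w + mg_mult F ends x w"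
proof -
  let ?A = "{e\<in>edges_avoiding F ends x. w \<in> ends e}" and ?B = "{e\<in>F. ends e = {x, w}}"
  have "ends e = {x, w}" if "e \<in> F" "x \<in> ends e" "w \<in> ends e" for e
    using card_2_obtain_other[of "ends e" x] assms(2,3) that by blast
  then have split: "{e\<in>F. w \<in> ends e} = ?A \<union> ?B" by blast
  have "card (?A \<union> ?B) = card ?A + card ?B"
    using assms(1) by (intro card_Un_disjoint) auto
  then show ?thesis unfolding mg_degree_def mg_mult_def split .
qed

definition mg_matching :: "'e set \<Rightarrow> ('e \<Rightarrow> 'v set) \<Rightarrow> bool" where
  "mg_matching M ends \<longleftrightarrow> (\<forall>e\<in>M. \<forall>f\<in>M. e \<noteq> f \<longrightarrow> ends e \<inter> ends f = {})"

lemma card_matching_edges_at: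
  assumes "mg_matching M ends" "\<And>e. P e \<Longrightarrow> v \<in> ends e"
  shows "card {e\<in>M. P e} = of_bool (\<exists>e\<in>M. P e)"
proof (cases "\<exists>e\<in>M. P e")
  case True
  then obtain e where e: "e \<in> M" "P e" by blast
  then have "{e\<in>M. P e} = {e}" using assms unfolding mg_matching_def by blast
  then show ?thesis using True by simp
next
  case False
  then show ?thesis by (simp add: card_eq_0_iff)
qed

lemma card_Collect_Diff_matching:
  assumes "finite F" "M \<subseteq> F" "mg_matching M ends" "\<And>e. P e \<Longrightarrow> v \<in> ends e"
  shows "card {e\<in>F - M. P e} + of_bool (\<exists>e\<in>M. P e) = card {e\<in>F. P e}"
proof -
  have "{e\<in>F. P e} = {e\<in>F - M. P e} \<union> {e\<in>M. P e}" using assms(2) by blast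
  moreover have "card ({e\<in>F - M. P e} \<union> {e\<in>M. P e}) = card {e\<in>F - M. P e} + card {e\<in>M. P e}"
    using assms(1,2) by (intro card_Un_disjoint) (auto intro: finite_subset)
  ultimately have "card {e\<in>F. P e} = card {e\<in>F - M. P e} + card {e\<in>M. P e}" by simp
  then show ?thesis using card_matching_edges_at[OF assms(3,4)] by simp
qed

lemma mg_degree_Diff_matching:
  "finite F \<Longrightarrow> M \<subseteq> F \<Longrightarrow> mg_matching M ends \<Longrightarrow>
     mg_degree (F - M) ends w + of_bool (\<exists>e\<in>M. w \<in> ends e) = mg_degree F ends w"
  unfolding mg_degree_def by (rule card_Collect_Diff_matching)

lemma mg_mult_Diff_matching:
  "finite F \<Longrightarrow> M \<subseteq> F \<Longrightarrow> mg_matching M ends \<Longrightarrow>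
     mg_mult (F - M) ends x w + of_bool (\<exists>e\<in>M. ends e = {x, w}) = mg_mult F ends x w"
  unfolding mg_mult_def by (rule card_Collect_Diff_matching[where v = x]) auto

section \<open>Proper colourings and Kempe changes\<close>

definition proper_colouring :: "'c set \<Rightarrow> 'e set \<Rightarrow> ('e \<Rightarrow> 'v set) \<Rightarrow> ('e \<Rightarrow> 'c) \<Rightarrow> bool" where
  "proper_colouring C F ends c \<longleftrightarrow> (\<forall>e\<in>F. c e \<in> C) \<and>
     (\<forall>e\<in>F. \<forall>f\<in>F. e \<noteq> f \<and> ends e \<inter> ends f \<noteq> {} \<longrightarrow> c e \<noteq> c f)"

definition colours_at :: "'e set \<Rightarrow> ('e \<Rightarrow> 'v set) \<Rightarrow> ('e \<Rightarrow> 'c) \<Rightarrow> 'v \<Rightarrow> 'c set" where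
  "colours_at F ends c v = c ` {e\<in>F. v \<in> ends e}"

lemma k_edge_colorable_iff_proper_colouring:
  "k_edge_colorable k F ends \<longleftrightarrow> (\<exists>c. proper_colouring {1..k} F ends c)"
  unfolding k_edge_colorable_def proper_colouring_def by blast

lemma proper_colouring_mono:
  assumes "proper_colouring C F ends c" "F' \<subseteq> F" "\<forall>e\<in>F'. c e \<in> C'"
  shows "proper_colouring C' F' ends c"
  using assms unfolding proper_colouring_def by blast

lemma proper_colouring_colour_class_matching:
  "proper_colouring C F ends c \<Longrightarrow> mg_matching {e\<in>F. c e = \<gamma>} ends"
  unfolding proper_colouring_def mg_matching_def by blast

lemma colours_at_subset:
  "proper_colouring C F ends c \<Longrightarrow> colours_at F ends c v \<subseteq> C"
  unfolding proper_colouring_def colours_at_def by blast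

lemma card_colours_at:
  assumes "proper_colouring C F ends c"
  shows "card (colours_at F ends c v) = mg_degree F ends v"
proof -
  have "inj_on c {e\<in>F. v \<in> ends e}"
    using assms unfolding proper_colouring_def by (intro inj_onI) blast
  then show ?thesis unfolding colours_at_def mg_degree_def by (rule card_image)
qed

lemma proper_colouring_add_colour_class:
  assumes "proper_colouring C F ends c" "mg_matching M ends" "\<alpha> \<notin> C"
  shows "proper_colouring (insert \<alpha> C) (F \<union> M) ends (\<lambda>e. if e \<in> M then \<alpha> else c e)"
  unfolding proper_colouring_def
proof (intro conjI ballI impI)
  fix e assume "e \<in> F \<union> M"
  then show "(if e \<in> M then \<alpha> else c e) \<in> insert \<alpha> C"
    using assms(1) unfolding proper_colouring_def by auto
next
  fix e f assume "e \<in> F \<union> M" "f \<in> F \<union> M" "e \<noteq> f \<and> ends e \<inter> ends f \<noteq> {}"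
  moreover have "c e \<noteq> \<alpha>" if "e \<in> F" for e
    using assms(1,3) that unfolding proper_colouring_def by blast
  ultimately show "(if e \<in> M then \<alpha> else c e) \<noteq> (if f \<in> M then \<alpha> else c f)"
    using assms(1,2) unfolding proper_colouring_def mg_matching_def by (auto; blast)
qed

lemma proper_colouring_unique_colour_nbr:
  assumes "proper_colouring C F ends c"
  obtains u0 where "{u. \<exists>e\<in>F. ends e = {v, u} \<and> c e = \<gamma>} \<subseteq> {u0}"
proof -
  have "u = u'" if "e \<in> F" "ends e = {v, u}" "f \<in> F" "ends f = {v, u'}" "c e = c f"
    for e f u u'
  proof -
    have "e = f" using assms that unfolding proper_colouring_def by blast
    then have "{v, u} = {v, u'}" using that by simp
    then show ?thesis by (auto simp: doubleton_eq_iff)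
  qed
  then show ?thesis using that by blast
qed

lemma two_colour_nbrs:
  fixes \<alpha> \<beta> :: 'c
  assumes proper: "proper_colouring C F ends c"
  defines "R \<equiv> \<lambda>u v. \<exists>e\<in>F. (c e = \<alpha> \<or> c e = \<beta>) \<and> ends e = {u, v}"
  shows "finite {u. R v u}" "card {u. R v u} \<le> 2"
    and "\<alpha> \<notin> colours_at F ends c v \<Longrightarrow> card {u. R v u} \<le> 1"
proof -
  define N where "N = (\<lambda>\<gamma>. {u. \<exists>e\<in>F. ends e = {v, u} \<and> c e = \<gamma>})"
  have N_le_1: "finite (N \<gamma>) \<and> card (N \<gamma>) \<le> 1" for \<gamma>
  proof -
    obtain u0 where "N \<gamma> \<subseteq> {u0}"
      using proper_colouring_unique_colour_nbr[OF proper] unfolding N_def by blast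
    then show ?thesis using finite_subset card_mono[of "{u0}"] by fastforce
  qed
  have R_nbrs: "{u. R v u} = N \<alpha> \<union> N \<beta>" unfolding R_def N_def by blast
  show "finite {u. R v u}" unfolding R_nbrs using N_le_1 by blast
  show "card {u. R v u} \<le> 2"
    unfolding R_nbrs using card_Un_le[of "N \<alpha>" "N \<beta>"] N_le_1[of \<alpha>] N_le_1[of \<beta>] by linarith
  assume "\<alpha> \<notin> colours_at F ends c v"
  then have "N \<alpha> = {}" unfolding N_def colours_at_def by force
  then show "card {u. R v u} \<le> 1" using N_le_1 unfolding R_nbrs by simp
qed

lemma kempe_swap:
  assumes proper: "proper_colouring C F ends c" and "\<alpha> \<in> C" "\<beta> \<in> C"
    and K_closed: "\<And>e. e \<in> F \<Longrightarrow> c e = \<alpha> \<or> c e = \<beta> \<Longrightarrow> ends e \<inter> K \<noteq> {} \<Longrightarrow> ends e \<subseteq> K"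
  defines "c' \<equiv> \<lambda>e. if (c e = \<alpha> \<or> c e = \<beta>) \<and> ends e \<subseteq> K then (if c e = \<alpha> then \<beta> else \<alpha>) else c e"
  shows "proper_colouring C F ends c'"
    and "\<And>w. w \<in> K \<Longrightarrow> \<beta> \<in> colours_at F ends c' w \<longleftrightarrow> \<alpha> \<in> colours_at F ends c w"
    and "\<And>w. w \<notin> K \<Longrightarrow> colours_at F ends c' w = colours_at F ends c w"
proof -
  define swapped where "swapped = (\<lambda>e. (c e = \<alpha> \<or> c e = \<beta>) \<and> ends e \<subseteq> K)"
  have swapped_at: "swapped e" if "e \<in> F" "c e = \<alpha> \<or> c e = \<beta>" "w \<in> ends e" "w \<in> K" for e w
    using K_closed[of e] that unfolding swapped_def by blast
  show "proper_colouring C F ends c'"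
    unfolding proper_colouring_def
  proof (intro conjI ballI impI)
    fix e assume "e \<in> F"
    then show "c' e \<in> C" using proper \<open>\<alpha> \<in> C\<close> \<open>\<beta> \<in> C\<close> unfolding proper_colouring_def c'_def by auto
  next
    fix e f assume ef: "e \<in> F" "f \<in> F" "e \<noteq> f \<and> ends e \<inter> ends f \<noteq> {}"
    then have "c e \<noteq> c f" using proper unfolding proper_colouring_def by blast
    moreover obtain v where "v \<in> ends e" "v \<in> ends f" using ef by blast
    moreover have "swapped e \<longleftrightarrow> swapped f" if "c e = \<alpha> \<or> c e = \<beta>" "c f = \<alpha> \<or> c f = \<beta>"
      using swapped_at[OF ef(1) that(1)] swapped_at[OF ef(2) that(2)] calculation(2,3) that
      unfolding swapped_def by blast
    ultimately show "c' e \<noteq> c' f" unfolding c'_def swapped_def by auto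
  qed
  show "\<beta> \<in> colours_at F ends c' w \<longleftrightarrow> \<alpha> \<in> colours_at F ends c w" if "w \<in> K" for w
    using swapped_at[OF _ _ _ that] unfolding colours_at_def c'_def swapped_def
    by (auto simp: image_iff split: if_splits) (metis+)
  show "colours_at F ends c' w = colours_at F ends c w" if "w \<notin> K" for w
    using that unfolding colours_at_def c'_def by (intro image_cong) auto
qed

text \<open>Kempe change: swap \<open>\<alpha>\<close> and \<open>\<beta>\<close> on the \<open>\<alpha>\<beta>\<close>-component of a vertex \<open>z\<close> missing
  \<open>\<alpha>\<close>. That component is a path with end \<open>z\<close>, so apart from \<open>z\<close> only its other end can
  lose \<open>\<beta>\<close>.\<close>
lemma kempe_change:
  assumes two: "\<forall>e\<in>F. card (ends e) = 2"
    and proper: "proper_colouring C F ends c" and "\<alpha> \<in> C" "\<beta> \<in> C"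
    and z_misses: "\<alpha> \<notin> colours_at F ends c z"
  obtains c' where "proper_colouring C F ends c'" "\<beta> \<notin> colours_at F ends c' z"
    "\<And>w w'. w \<noteq> z \<Longrightarrow> w' \<noteq> z \<Longrightarrow>
       \<beta> \<in> colours_at F ends c w - colours_at F ends c' w \<Longrightarrow>
       \<beta> \<in> colours_at F ends c w' - colours_at F ends c' w' \<Longrightarrow> w = w'"
proof -
  define R where "R = (\<lambda>u v. \<exists>e\<in>F. (c e = \<alpha> \<or> c e = \<beta>) \<and> ends e = {u, v})"
  define K where "K = {v. R\<^sup>*\<^sup>* z v}"
  have K_closed: "ends e \<subseteq> K" if e: "e \<in> F" "c e = \<alpha> \<or> c e = \<beta>" "ends e \<inter> K \<noteq> {}" for e
  proof -
    obtain v where v: "v \<in> ends e" "v \<in> K" using e(3) by blast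
    obtain u where u: "ends e = {v, u}"
      using card_2_obtain_other[of "ends e" v] two e(1) v(1) by blast
    then have "R\<^sup>*\<^sup>* z u"
      using e v unfolding R_def K_def by (auto intro: rtranclp.rtrancl_into_rtrancl)
    then show ?thesis using u v(2) unfolding K_def by auto
  qed
  note swap = kempe_swap[OF proper \<open>\<alpha> \<in> C\<close> \<open>\<beta> \<in> C\<close> K_closed]
  define c' where
    "c' = (\<lambda>e. if (c e = \<alpha> \<or> c e = \<beta>) \<and> ends e \<subseteq> K then (if c e = \<alpha> then \<beta> else \<alpha>) else c e)"
  have "z \<in> K" unfolding K_def by simp
  then have z_misses': "\<beta> \<notin> colours_at F ends c' z" using swap(2) z_misses unfolding c'_def by blast
  text \<open>A vertex losing \<open>\<beta>\<close> is an end of the component.\<close>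
  have loses_beta: "w \<in> K \<and> \<alpha> \<notin> colours_at F ends c w"
    if "\<beta> \<in> colours_at F ends c w - colours_at F ends c' w" for w
    using swap(2,3)[of w] that unfolding c'_def by (cases "w \<in> K") auto
  have R_sym: "R u v \<Longrightarrow> R v u" for u v unfolding R_def by (auto simp: insert_commute)
  have nbrs: "finite {u. R v u}" "card {u. R v u} \<le> 2"
    "\<alpha> \<notin> colours_at F ends c v \<Longrightarrow> card {u. R v u} \<le> 1" for v
    unfolding R_def by (fact two_colour_nbrs[OF proper])+
  have "w = w'" if "w \<noteq> z" "w' \<noteq> z"
    "\<beta> \<in> colours_at F ends c w - colours_at F ends c' w"
    "\<beta> \<in> colours_at F ends c w' - colours_at F ends c' w'" for w w'
  proof (rule ccontr)
    assume "w \<noteq> w'"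
    have "w \<in> K" "w' \<in> K" "\<alpha> \<notin> colours_at F ends c w" "\<alpha> \<notin> colours_at F ends c w'"
      using loses_beta that(3,4) by auto
    then show False
      using max_degree_two_component_at_most_two_ends[of R z w w', OF R_sym nbrs(1,2)]
        nbrs(3)[OF z_misses] nbrs(3) that(1,2) \<open>w \<noteq> w'\<close> unfolding K_def by blast
  qed
  with swap(1) z_misses' show ?thesis using that unfolding c'_def by blast
qed

section \<open>Extending a colouring to the edges at one vertex\<close>

definition mg_sigma :: "'e set \<Rightarrow> ('e \<Rightarrow> 'v set) \<Rightarrow> 'v \<Rightarrow> 'v \<Rightarrow> nat" where
  "mg_sigma F ends x w = mg_degree F ends w + mg_mult F ends x w"

definition extension_condition :: "nat \<Rightarrow> 'e set \<Rightarrow> ('e \<Rightarrow> 'v set) \<Rightarrow> 'v \<Rightarrow> bool" where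
  "extension_condition k F ends x \<longleftrightarrow> mg_degree F ends x \<le> k \<and>
     (\<forall>w. 0 < mg_mult F ends x w \<longrightarrow> mg_sigma F ends x w \<le> k + 1) \<and>
     (\<forall>w w'. 0 < mg_mult F ends x w \<longrightarrow> 0 < mg_mult F ends x w' \<longrightarrow> w \<noteq> w' \<longrightarrow>
        mg_sigma F ends x w \<le> k \<or> mg_sigma F ends x w' \<le> k)"

lemma card_missing_colours:
  assumes "finite F" "\<forall>e\<in>F. card (ends e) = 2" "finite C"
    and "proper_colouring C (edges_avoiding F ends x) ends c" "w \<noteq> x"
  shows "card (C - colours_at (edges_avoiding F ends x) ends c w) + mg_sigma F ends x w =
    card C + 2 * mg_mult F ends x w"
proof -
  let ?U = "colours_at (edges_avoiding F ends x) ends c w"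
  have "?U \<subseteq> C" using colours_at_subset[OF assms(4)] .
  moreover have "finite ?U" using \<open>?U \<subseteq> C\<close> assms(3) by (rule finite_subset)
  ultimately have "card (C - ?U) = card C - card ?U" "card ?U \<le> card C"
    using assms(3) by (simp_all add: card_Diff_subset card_mono)
  moreover have "card ?U = mg_degree (edges_avoiding F ends x) ends w"
    using card_colours_at[OF assms(4)] .
  ultimately show ?thesis
    using mg_degree_split[OF assms(1,2,5)] unfolding mg_sigma_def by linarith
qed

lemma exists_missing_colour:
  assumes "finite F" "\<forall>e\<in>F. card (ends e) = 2" "finite C"
    and "proper_colouring C (edges_avoiding F ends x) ends c"
    and "0 < mg_mult F ends x w" "mg_sigma F ends x w \<le> card C + 1"
  obtains \<alpha> where "\<alpha> \<in> C" "\<alpha> \<notin> colours_at (edges_avoiding F ends x) ends c w"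
proof -
  have "card (C - colours_at (edges_avoiding F ends x) ends c w) > 0"
    using card_missing_colours[OF assms(1-4) mg_nbr_neq[OF assms(2,5)]] assms(5,6) by linarith
  then have "C - colours_at (edges_avoiding F ends x) ends c w \<noteq> {}" by (simp add: card_gt_0_iff)
  then show ?thesis using that by blast
qed

text \<open>The bounds \<open>k + [\<alpha> \<in> colours at w]\<close> are what the extension condition with
  \<open>k - 1\<close> colours asks for once the edges coloured \<open>\<alpha>\<close> and one edge \<open>xz\<close> are removed.\<close>
definition good_missing_colour ::
    "nat \<Rightarrow> 'e set \<Rightarrow> ('e \<Rightarrow> 'v set) \<Rightarrow> 'v \<Rightarrow> ('e \<Rightarrow> 'c) \<Rightarrow> 'v \<Rightarrow> 'c \<Rightarrow> bool" where
  "good_missing_colour k F ends x c z \<alpha> \<longleftrightarrow>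
     0 < mg_mult F ends x z \<and> \<alpha> \<notin> colours_at (edges_avoiding F ends x) ends c z \<and>
     (\<forall>w. 0 < mg_mult F ends x w \<longrightarrow> w \<noteq> z \<longrightarrow>
        mg_sigma F ends x w \<le> k + of_bool (\<alpha> \<in> colours_at (edges_avoiding F ends x) ends c w)) \<and>
     (\<forall>w w'. 0 < mg_mult F ends x w \<longrightarrow> 0 < mg_mult F ends x w' \<longrightarrow> w \<noteq> z \<longrightarrow> w' \<noteq> z \<longrightarrow>
        w \<noteq> w' \<longrightarrow>
        mg_sigma F ends x w < k + of_bool (\<alpha> \<in> colours_at (edges_avoiding F ends x) ends c w) \<or>
        mg_sigma F ends x w' < k + of_bool (\<alpha> \<in> colours_at (edges_avoiding F ends x) ends c w'))"

lemma good_missing_colourI_present: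
  assumes ext: "extension_condition k F ends x"
    and z: "0 < mg_mult F ends x z" "\<alpha> \<notin> colours_at (edges_avoiding F ends x) ends c z"
    and present: "\<And>w. 0 < mg_mult F ends x w \<Longrightarrow> w \<noteq> z \<Longrightarrow> k \<le> mg_sigma F ends x w \<Longrightarrow>
                    \<alpha> \<in> colours_at (edges_avoiding F ends x) ends c w"
  shows "good_missing_colour k F ends x c z \<alpha>"
  unfolding good_missing_colour_def
proof (intro conjI allI impI)
  let ?s = "\<lambda>w. of_bool (\<alpha> \<in> colours_at (edges_avoiding F ends x) ends c w) :: nat"
  have sigma_le: "mg_sigma F ends x w \<le> k + 1" if "0 < mg_mult F ends x w" for w
    using ext that unfolding extension_condition_def by blast
  show "0 < mg_mult F ends x z" "\<alpha> \<notin> colours_at (edges_avoiding F ends x) ends c z" by (fact z)+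
  fix w assume w: "0 < mg_mult F ends x w" "w \<noteq> z"
  show "mg_sigma F ends x w \<le> k + ?s w"
    using sigma_le[OF w(1)] present[OF w] by (cases "k \<le> mg_sigma F ends x w") auto
  fix w' assume w': "0 < mg_mult F ends x w'" "w' \<noteq> z" "w \<noteq> w'"
  show "mg_sigma F ends x w < k + ?s w \<or> mg_sigma F ends x w' < k + ?s w'"
  proof (rule ccontr)
    assume "\<not> ?thesis"
    then have "k \<le> mg_sigma F ends x w" "k \<le> mg_sigma F ends x w'"
      "mg_sigma F ends x w \<ge> k + ?s w" "mg_sigma F ends x w' \<ge> k + ?s w'" by auto
    moreover have "\<alpha> \<in> colours_at (edges_avoiding F ends x) ends c w"
      "\<alpha> \<in> colours_at (edges_avoiding F ends x) ends c w'"
      using present w w'(1,2) calculation(1,2) by blast+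
    ultimately have "k < mg_sigma F ends x w" "k < mg_sigma F ends x w'" by simp_all
    moreover have "mg_sigma F ends x w \<le> k \<or> mg_sigma F ends x w' \<le> k"
      using ext w(1) w'(1,3) unfolding extension_condition_def by blast
    ultimately show False by linarith
  qed
qed

lemma good_missing_colourI_light:
  assumes z: "0 < mg_mult F ends x z" "\<alpha> \<notin> colours_at (edges_avoiding F ends x) ends c z"
    and light: "\<And>w. 0 < mg_mult F ends x w \<Longrightarrow> w \<noteq> z \<Longrightarrow> mg_sigma F ends x w \<le> k"
    and unique: "\<And>w w'. 0 < mg_mult F ends x w \<Longrightarrow> 0 < mg_mult F ends x w' \<Longrightarrow> w \<noteq> z \<Longrightarrow> w' \<noteq> z \<Longrightarrow>
        k \<le> mg_sigma F ends x w \<Longrightarrow> k \<le> mg_sigma F ends x w' \<Longrightarrow>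
        \<alpha> \<notin> colours_at (edges_avoiding F ends x) ends c w \<Longrightarrow>
        \<alpha> \<notin> colours_at (edges_avoiding F ends x) ends c w' \<Longrightarrow> w = w'"
  shows "good_missing_colour k F ends x c z \<alpha>"
  unfolding good_missing_colour_def
proof (intro conjI allI impI)
  let ?s = "\<lambda>w. of_bool (\<alpha> \<in> colours_at (edges_avoiding F ends x) ends c w) :: nat"
  show "0 < mg_mult F ends x z" "\<alpha> \<notin> colours_at (edges_avoiding F ends x) ends c z" by (fact z)+
  fix w assume w: "0 < mg_mult F ends x w" "w \<noteq> z"
  show "mg_sigma F ends x w \<le> k + ?s w" using light[OF w] by simp
  fix w' assume w': "0 < mg_mult F ends x w'" "w' \<noteq> z" "w \<noteq> w'"
  show "mg_sigma F ends x w < k + ?s w \<or> mg_sigma F ends x w' < k + ?s w'"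
  proof (rule ccontr)
    assume "\<not> ?thesis"
    then have "k \<le> mg_sigma F ends x w" "k \<le> mg_sigma F ends x w'"
      "\<alpha> \<notin> colours_at (edges_avoiding F ends x) ends c w"
      "\<alpha> \<notin> colours_at (edges_avoiding F ends x) ends c w'"
      using light[OF w] light[OF w'(1,2)] by auto
    then show False using unique[OF w(1) w'(1) w(2) w'(2)] w'(3) by blast
  qed
qed

lemma sum_missing_colours_le:
  assumes fin: "finite F" and two: "\<forall>e\<in>F. card (ends e) = 2" and "finite C"
    and proper: "proper_colouring C (edges_avoiding F ends x) ends c"
    and degree_x: "mg_degree F ends x \<le> card C"
  defines "T \<equiv> {w. 0 < mg_mult F ends x w \<and> card C \<le> mg_sigma F ends x w}"
  shows "(\<Sum>\<alpha>\<in>C. card {w\<in>T. \<alpha> \<notin> colours_at (edges_avoiding F ends x) ends c w}) +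
      card {w\<in>T. mg_sigma F ends x w = card C + 1} \<le> 2 * card C"
proof -
  let ?missing = "\<lambda>w. C - colours_at (edges_avoiding F ends x) ends c w"
  have finite_T: "finite T"
    using finite_mg_nbrs[OF fin two, of x] unfolding T_def by (rule finite_subset[rotated]) blast
  have card_as_sum: "card {a\<in>A. P a} = (\<Sum>a\<in>A. of_bool (P a))" if "finite A" for A :: "'b set" and P
    using that by (simp add: Int_def)
  have "(\<Sum>\<alpha>\<in>C. card {w\<in>T. \<alpha> \<notin> colours_at (edges_avoiding F ends x) ends c w}) =
      (\<Sum>\<alpha>\<in>C. \<Sum>w\<in>T. of_bool (\<alpha> \<notin> colours_at (edges_avoiding F ends x) ends c w))"
    using finite_T by (intro sum.cong refl card_as_sum)
  also have "\<dots> = (\<Sum>w\<in>T. \<Sum>\<alpha>\<in>C. of_bool (\<alpha> \<notin> colours_at (edges_avoiding F ends x) ends c w))"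
    by (rule sum.swap)
  also have "\<dots> = (\<Sum>w\<in>T. card (?missing w))"
    using \<open>finite C\<close> by (intro sum.cong refl) (simp add: Int_def set_diff_eq)
  finally have "(\<Sum>\<alpha>\<in>C. card {w\<in>T. \<alpha> \<notin> colours_at (edges_avoiding F ends x) ends c w}) =
      (\<Sum>w\<in>T. card (?missing w))" .
  moreover have "card {w\<in>T. mg_sigma F ends x w = card C + 1} =
      (\<Sum>w\<in>T. of_bool (mg_sigma F ends x w = card C + 1))"
    using finite_T by (rule card_as_sum)
  moreover have
    "card (?missing w) + of_bool (mg_sigma F ends x w = card C + 1) \<le> 2 * mg_mult F ends x w"
    if "w \<in> T" for w
  proof -
    have w: "0 < mg_mult F ends x w" "card C \<le> mg_sigma F ends x w"
      using that unfolding T_def by auto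
    then show ?thesis
      using card_missing_colours[OF fin two \<open>finite C\<close> proper mg_nbr_neq[OF two w(1)]]
      by (cases "mg_sigma F ends x w = card C + 1") simp_all
  qed
  then have "(\<Sum>w\<in>T. card (?missing w) + of_bool (mg_sigma F ends x w = card C + 1)) \<le>
      (\<Sum>w\<in>T. 2 * mg_mult F ends x w)"
    by (rule sum_mono)
  moreover have "(\<Sum>w\<in>T. 2 * mg_mult F ends x w) \<le> 2 * card C"
    using sum_mg_mult_le_degree[OF fin, where T=T and ends=ends and x=x] degree_x
      by (simp add: sum_distrib_left[symmetric])
  ultimately show ?thesis by (simp add: sum.distrib)
qed

lemma colour_missing_at_most_twice:
  assumes fin: "finite F" and two: "\<forall>e\<in>F. card (ends e) = 2" and "finite C" "C \<noteq> {}"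
    and proper: "proper_colouring C (edges_avoiding F ends x) ends c"
    and degree_x: "mg_degree F ends x \<le> card C"
  defines "M \<equiv> \<lambda>\<alpha>. {w. 0 < mg_mult F ends x w \<and> card C \<le> mg_sigma F ends x w \<and>
                       \<alpha> \<notin> colours_at (edges_avoiding F ends x) ends c w}"
  assumes twice: "\<forall>\<alpha>\<in>C. 2 \<le> card (M \<alpha>)"
  shows "\<And>w. 0 < mg_mult F ends x w \<Longrightarrow> mg_sigma F ends x w \<noteq> card C + 1"
    and "\<exists>\<alpha>\<in>C. card (M \<alpha>) \<le> 2"
proof -
  define T where "T = {w. 0 < mg_mult F ends x w \<and> card C \<le> mg_sigma F ends x w}"
  have M_eq: "M \<alpha> = {w\<in>T. \<alpha> \<notin> colours_at (edges_avoiding F ends x) ends c w}" for \<alpha>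
    unfolding M_def T_def by blast
  have finite_T: "finite T"
    using finite_mg_nbrs[OF fin two, of x] unfolding T_def by (rule finite_subset[rotated]) blast
  have "(\<Sum>\<alpha>\<in>C. 2) \<le> (\<Sum>\<alpha>\<in>C. card (M \<alpha>))" using twice by (intro sum_mono) blast
  moreover have "(\<Sum>\<alpha>\<in>C. card (M \<alpha>)) + card {w\<in>T. mg_sigma F ends x w = card C + 1} \<le> 2 * card C"
    using sum_missing_colours_le[OF fin two \<open>finite C\<close> proper degree_x] unfolding M_eq T_def .
  ultimately have "card {w\<in>T. mg_sigma F ends x w = card C + 1} = 0"
    and sum_le: "(\<Sum>\<alpha>\<in>C. card (M \<alpha>)) \<le> 2 * card C" by simp_all
  then have "{w\<in>T. mg_sigma F ends x w = card C + 1} = {}" using finite_T by simp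
  then show "\<And>w. 0 < mg_mult F ends x w \<Longrightarrow> mg_sigma F ends x w \<noteq> card C + 1"
    unfolding T_def by (metis (mono_tags, lifting) empty_iff le_add1 mem_Collect_eq)
  show "\<exists>\<alpha>\<in>C. card (M \<alpha>) \<le> 2"
  proof (rule ccontr)
    assume "\<not> ?thesis"
    then have "(\<Sum>\<alpha>\<in>C. 3) \<le> (\<Sum>\<alpha>\<in>C. card (M \<alpha>))" by (intro sum_mono) force
    moreover have "0 < card C" using \<open>finite C\<close> \<open>C \<noteq> {}\<close> by (simp add: card_gt_0_iff)
    ultimately show False using sum_le by simp
  qed
qed

lemma good_missing_colour_by_kempe_change:
  assumes fin: "finite F" and two: "\<forall>e\<in>F. card (ends e) = 2" and "finite C"
    and proper: "proper_colouring C (edges_avoiding F ends x) ends c"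
    and ext: "extension_condition (card C) F ends x"
    and z: "0 < mg_mult F ends x z"
    and light: "\<And>w. 0 < mg_mult F ends x w \<Longrightarrow> w \<noteq> z \<Longrightarrow> mg_sigma F ends x w \<le> card C"
    and "\<beta> \<in> C"
    and present: "\<And>w. 0 < mg_mult F ends x w \<Longrightarrow> card C \<le> mg_sigma F ends x w \<Longrightarrow>
                    \<beta> \<in> colours_at (edges_avoiding F ends x) ends c w"
  obtains c' where "proper_colouring C (edges_avoiding F ends x) ends c'"
    "good_missing_colour (card C) F ends x c' z \<beta>"
proof -
  define F0 where "F0 = edges_avoiding F ends x"
  have "mg_sigma F ends x z \<le> card C + 1" using ext z unfolding extension_condition_def by blast
  then obtain \<alpha> where \<alpha>: "\<alpha> \<in> C" "\<alpha> \<notin> colours_at F0 ends c z"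
    using exists_missing_colour[OF fin two \<open>finite C\<close> proper z] unfolding F0_def by blast
  have two0: "\<forall>e\<in>F0. card (ends e) = 2" using two unfolding F0_def by blast
  obtain c' where c': "proper_colouring C F0 ends c'" "\<beta> \<notin> colours_at F0 ends c' z"
    and lost: "\<And>w w'. w \<noteq> z \<Longrightarrow> w' \<noteq> z \<Longrightarrow>
       \<beta> \<in> colours_at F0 ends c w - colours_at F0 ends c' w \<Longrightarrow>
       \<beta> \<in> colours_at F0 ends c w' - colours_at F0 ends c' w' \<Longrightarrow> w = w'"
    using kempe_change[OF two0 proper[folded F0_def] \<alpha>(1) \<open>\<beta> \<in> C\<close> \<alpha>(2)] by blast
  have "good_missing_colour (card C) F ends x c' z \<beta>"
  proof (rule good_missing_colourI_light[OF z c'(2)[unfolded F0_def] light])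
    fix w w' assume "0 < mg_mult F ends x w" "0 < mg_mult F ends x w'" "w \<noteq> z" "w' \<noteq> z"
      "card C \<le> mg_sigma F ends x w" "card C \<le> mg_sigma F ends x w'"
      "\<beta> \<notin> colours_at (edges_avoiding F ends x) ends c' w"
      "\<beta> \<notin> colours_at (edges_avoiding F ends x) ends c' w'"
    then show "w = w'" using lost present unfolding F0_def by blast
  qed
  then show ?thesis using that c'(1) unfolding F0_def by blast
qed

lemma good_missing_colour_by_counting:
  assumes fin: "finite F" and two: "\<forall>e\<in>F. card (ends e) = 2" and "finite C" "C \<noteq> {}"
    and proper: "proper_colouring C (edges_avoiding F ends x) ends c"
    and ext: "extension_condition (card C) F ends x"
  defines "M \<equiv> \<lambda>\<alpha>. {w. 0 < mg_mult F ends x w \<and> card C \<le> mg_sigma F ends x w \<and>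
                       \<alpha> \<notin> colours_at (edges_avoiding F ends x) ends c w}"
  assumes twice: "\<forall>\<alpha>\<in>C. 2 \<le> card (M \<alpha>)"
  obtains \<alpha> z where "\<alpha> \<in> C" "good_missing_colour (card C) F ends x c z \<alpha>"
proof -
  have degree_x: "mg_degree F ends x \<le> card C" using ext unfolding extension_condition_def by blast
  have M_eq: "{w. 0 < mg_mult F ends x w \<and> card C \<le> mg_sigma F ends x w \<and>
      \<alpha> \<notin> colours_at (edges_avoiding F ends x) ends c w} = M \<alpha>" for \<alpha>
    unfolding M_def ..
  note counting = colour_missing_at_most_twice[OF fin two \<open>finite C\<close> \<open>C \<noteq> {}\<close> proper degree_x,
      unfolded M_eq, OF twice]
  obtain \<alpha> where \<alpha>: "\<alpha> \<in> C" "card (M \<alpha>) \<le> 2" using counting(2) by blast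
  then obtain z where "z \<in> M \<alpha>" using twice by fastforce
  then have z: "0 < mg_mult F ends x z" "\<alpha> \<notin> colours_at (edges_avoiding F ends x) ends c z"
    unfolding M_def by blast+
  have "finite (M \<alpha>)"
    using finite_mg_nbrs[OF fin two, of x] unfolding M_def by (rule finite_subset[rotated]) blast
  then have "card (M \<alpha> - {z}) \<le> 1" using \<alpha>(2) \<open>z \<in> M \<alpha>\<close> by simp
  then have M_unique: "w = w'" if "w \<in> M \<alpha> - {z}" "w' \<in> M \<alpha> - {z}" for w w'
    using that \<open>finite (M \<alpha>)\<close> by (auto simp: card_le_Suc0_iff_eq)
  have "good_missing_colour (card C) F ends x c z \<alpha>"
  proof (rule good_missing_colourI_light[OF z])
    show "mg_sigma F ends x w \<le> card C" if "0 < mg_mult F ends x w" "w \<noteq> z" for w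
    proof -
      have "mg_sigma F ends x w \<le> card C + 1"
        using ext that(1) unfolding extension_condition_def by blast
      then show ?thesis using counting(1)[OF that(1)] by linarith
    qed
  next
    fix w w' assume "0 < mg_mult F ends x w" "0 < mg_mult F ends x w'" "w \<noteq> z" "w' \<noteq> z"
      "card C \<le> mg_sigma F ends x w" "card C \<le> mg_sigma F ends x w'"
      "\<alpha> \<notin> colours_at (edges_avoiding F ends x) ends c w"
      "\<alpha> \<notin> colours_at (edges_avoiding F ends x) ends c w'"
    then show "w = w'" using M_unique unfolding M_def by blast
  qed
  then show ?thesis using that \<alpha>(1) by blast
qed

lemma extension_condition_obtain_nbr:
  assumes ext: "extension_condition k F ends x" and "0 < mg_mult F ends x z0"
  obtains z where "0 < mg_mult F ends x z"
    "\<And>w. 0 < mg_mult F ends x w \<Longrightarrow> w \<noteq> z \<Longrightarrow> mg_sigma F ends x w \<le> k"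
proof (cases "\<exists>z. 0 < mg_mult F ends x z \<and> mg_sigma F ends x z = k + 1")
  case True
  then obtain z where z: "0 < mg_mult F ends x z" "mg_sigma F ends x z = k + 1" by blast
  have "mg_sigma F ends x w \<le> k" if "0 < mg_mult F ends x w" "w \<noteq> z" for w
  proof -
    have "mg_sigma F ends x w \<le> k \<or> mg_sigma F ends x z \<le> k"
      using ext that z(1) unfolding extension_condition_def by blast
    then show ?thesis using z(2) by linarith
  qed
  then show ?thesis using that z(1) by blast
next
  case False
  have "mg_sigma F ends x w \<le> k" if "0 < mg_mult F ends x w" for w
  proof -
    have "mg_sigma F ends x w \<le> k + 1" using ext that unfolding extension_condition_def by blast
    moreover have "mg_sigma F ends x w \<noteq> k + 1" using False that by blast
    ultimately show ?thesis by linarith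
  qed
  then show ?thesis using that \<open>0 < mg_mult F ends x z0\<close> by blast
qed

text \<open>Write \<open>M \<alpha>\<close> for the neighbours \<open>w\<close> of \<open>x\<close> with \<open>\<sigma>(w) \<ge> k\<close> at which \<open>\<alpha>\<close> is missing.
  If \<open>M \<beta> = {}\<close>, a Kempe change makes \<open>\<beta>\<close> good; if \<open>M \<alpha> = {z}\<close>, then \<open>\<alpha>\<close> is already good at
  \<open>z\<close>; otherwise counting shows that some \<open>M \<alpha>\<close> has two elements and that no neighbour has
  \<open>\<sigma>(w) = k + 1\<close>.\<close>
lemma exists_good_missing_colour:
  assumes fin: "finite F" and two: "\<forall>e\<in>F. card (ends e) = 2" and "finite C"
    and proper: "proper_colouring C (edges_avoiding F ends x) ends c"
    and ext: "extension_condition (card C) F ends x" and "0 < mg_degree F ends x"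
  obtains c' z \<alpha> where "proper_colouring C (edges_avoiding F ends x) ends c'" "\<alpha> \<in> C"
    "good_missing_colour (card C) F ends x c' z \<alpha>"
proof -
  define M where "M = (\<lambda>\<alpha>. {w. 0 < mg_mult F ends x w \<and> card C \<le> mg_sigma F ends x w \<and>
                       \<alpha> \<notin> colours_at (edges_avoiding F ends x) ends c w})"
  have "finite (M \<alpha>)" for \<alpha>
    using finite_mg_nbrs[OF fin two, of x] unfolding M_def by (rule finite_subset[rotated]) blast
  then have "(\<exists>\<beta>\<in>C. M \<beta> = {}) \<or> (\<exists>\<alpha>\<in>C. \<exists>z. M \<alpha> = {z}) \<or> (\<forall>\<alpha>\<in>C. 2 \<le> card (M \<alpha>))"
    using two_le_card_if_not_singleton by blast
  then consider (present) \<beta> where "\<beta> \<in> C" "M \<beta> = {}"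
    | (once) \<alpha> z where "\<alpha> \<in> C" "M \<alpha> = {z}"
    | (twice) "\<forall>\<alpha>\<in>C. 2 \<le> card (M \<alpha>)"
    by blast
  then show ?thesis
  proof cases
    case (present \<beta>)
    obtain z0 where "0 < mg_mult F ends x z0"
      using mg_degree_pos_imp_nbr[OF fin two \<open>0 < mg_degree F ends x\<close>] .
    then obtain z where z: "0 < mg_mult F ends x z"
      and light: "\<And>w. 0 < mg_mult F ends x w \<Longrightarrow> w \<noteq> z \<Longrightarrow> mg_sigma F ends x w \<le> card C"
      using extension_condition_obtain_nbr[OF ext] by blast
    have "\<beta> \<in> colours_at (edges_avoiding F ends x) ends c w"
      if "0 < mg_mult F ends x w" "card C \<le> mg_sigma F ends x w" for w
      using present(2) that unfolding M_def by blast
    then obtain c' where "proper_colouring C (edges_avoiding F ends x) ends c'"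
      "good_missing_colour (card C) F ends x c' z \<beta>"
      using good_missing_colour_by_kempe_change[OF fin two \<open>finite C\<close> proper ext z light present(1)]
      by blast
    then show ?thesis using that present(1) by blast
  next
    case (once \<alpha> z)
    then have "0 < mg_mult F ends x z" "\<alpha> \<notin> colours_at (edges_avoiding F ends x) ends c z"
      unfolding M_def by blast+
    then have "good_missing_colour (card C) F ends x c z \<alpha>"
      using once(2) unfolding M_def by (intro good_missing_colourI_present[OF ext]) blast+
    then show ?thesis using that proper once(1) by blast
  next
    case twice
    have "C \<noteq> {}" using ext \<open>0 < mg_degree F ends x\<close> unfolding extension_condition_def by auto
    moreover have "\<forall>\<alpha>\<in>C. 2 \<le> card {w. 0 < mg_mult F ends x w \<and> card C \<le> mg_sigma F ends x w \<and>
        \<alpha> \<notin> colours_at (edges_avoiding F ends x) ends c w}"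
      using twice unfolding M_def .
    ultimately obtain \<alpha> z where "\<alpha> \<in> C" "good_missing_colour (card C) F ends x c z \<alpha>"
      using good_missing_colour_by_counting[OF fin two \<open>finite C\<close> _ proper ext] by blast
    then show ?thesis using that proper by blast
  qed
qed

lemma colour_class_insert_matching:
  assumes proper: "proper_colouring C (edges_avoiding F ends x) ends c"
    and z_misses: "\<alpha> \<notin> colours_at (edges_avoiding F ends x) ends c z"
    and e0: "ends e0 = {x, z}"
  shows "mg_matching (insert e0 {e\<in>edges_avoiding F ends x. c e = \<alpha>}) ends"
proof -
  have avoids_e0: "ends e \<inter> ends e0 = {}" if "e \<in> edges_avoiding F ends x" "c e = \<alpha>" for e
  proof -
    have "z \<notin> ends e" using z_misses that unfolding colours_at_def by blast
    then show ?thesis using that(1) e0 by auto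
  qed
  show ?thesis
    using proper_colouring_colour_class_matching[OF proper, of \<alpha>] avoids_e0
    unfolding mg_matching_def by (simp add: Int_commute)
qed

lemma mg_sigma_remove_colour_class:
  assumes fin: "finite F" and two: "\<forall>e\<in>F. card (ends e) = 2"
    and proper: "proper_colouring C (edges_avoiding F ends x) ends c"
    and z_misses: "\<alpha> \<notin> colours_at (edges_avoiding F ends x) ends c z"
    and e0: "e0 \<in> F" "ends e0 = {x, z}"
  defines "M \<equiv> insert e0 {e\<in>edges_avoiding F ends x. c e = \<alpha>}"
  shows "Suc (mg_degree (F - M) ends x) = mg_degree F ends x"
    and "mg_sigma (F - M) ends x z + 2 = mg_sigma F ends x z"
    and "\<And>w. w \<noteq> x \<Longrightarrow> w \<noteq> z \<Longrightarrow> mg_sigma (F - M) ends x w +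
        of_bool (\<alpha> \<in> colours_at (edges_avoiding F ends x) ends c w) = mg_sigma F ends x w"
    and "\<And>w. 0 < mg_mult (F - M) ends x w \<Longrightarrow> 0 < mg_mult F ends x w"
proof -
  define F0 where "F0 = edges_avoiding F ends x"
  have M_eq: "M = insert e0 {e\<in>F0. c e = \<alpha>}" unfolding M_def F0_def ..
  have "M \<subseteq> F" unfolding M_def using e0(1) by blast
  have matching: "mg_matching M ends"
    unfolding M_def by (rule colour_class_insert_matching[OF proper z_misses e0(2)])
  have "z \<noteq> x" using two e0 by fastforce
  have covered: "(\<exists>e\<in>M. w \<in> ends e) \<longleftrightarrow> w = x \<or> w = z \<or> \<alpha> \<in> colours_at F0 ends c w" for w
  proof -
    have "\<alpha> \<in> colours_at F0 ends c w \<longleftrightarrow> (\<exists>e\<in>{e\<in>F0. c e = \<alpha>}. w \<in> ends e)"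
      unfolding colours_at_def by blast
    then show ?thesis unfolding M_eq using e0(2) by simp
  qed
  have joins: "(\<exists>e\<in>M. ends e = {x, w}) \<longleftrightarrow> w = z" for w
  proof -
    have "\<not> (\<exists>e\<in>{e\<in>F0. c e = \<alpha>}. ends e = {x, w})" unfolding F0_def by auto
    then show ?thesis unfolding M_eq using e0(2) \<open>z \<noteq> x\<close> by (auto simp: doubleton_eq_iff)
  qed
  have degree: "mg_degree (F - M) ends w + of_bool (w = x \<or> w = z \<or> \<alpha> \<in> colours_at F0 ends c w) =
      mg_degree F ends w" for w
    using mg_degree_Diff_matching[OF fin \<open>M \<subseteq> F\<close> matching, of w] covered by simp
  have mult: "mg_mult (F - M) ends x w + of_bool (w = z) = mg_mult F ends x w" for w
    using mg_mult_Diff_matching[OF fin \<open>M \<subseteq> F\<close> matching, of x w] joins by simp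
  show "Suc (mg_degree (F - M) ends x) = mg_degree F ends x"
    using degree[of x] by simp
  show "mg_sigma (F - M) ends x z + 2 = mg_sigma F ends x z"
    using degree[of z] mult[of z] unfolding mg_sigma_def by simp
  show "mg_sigma (F - M) ends x w + of_bool (\<alpha> \<in> colours_at (edges_avoiding F ends x) ends c w) =
      mg_sigma F ends x w" if "w \<noteq> x" "w \<noteq> z" for w
    using degree[of w] mult[of w] that unfolding mg_sigma_def F0_def by simp
  show "0 < mg_mult F ends x w" if "0 < mg_mult (F - M) ends x w" for w
    using mult[of w] that by linarith
qed

lemma extension_condition_remove_colour_class:
  assumes fin: "finite F" and two: "\<forall>e\<in>F. card (ends e) = 2"
    and proper: "proper_colouring C (edges_avoiding F ends x) ends c"
    and ext: "extension_condition (card C) F ends x"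
    and good: "good_missing_colour (card C) F ends x c z \<alpha>"
    and e0: "e0 \<in> F" "ends e0 = {x, z}"
  defines "M \<equiv> insert e0 {e\<in>edges_avoiding F ends x. c e = \<alpha>}"
  shows "extension_condition (card C - 1) (F - M) ends x"
proof -
  define k where "k = card C"
  define s where "s = (\<lambda>w. of_bool (\<alpha> \<in> colours_at (edges_avoiding F ends x) ends c w) :: nat)"
  have z: "0 < mg_mult F ends x z" "\<alpha> \<notin> colours_at (edges_avoiding F ends x) ends c z"
    using good unfolding good_missing_colour_def by blast+
  note removed = mg_sigma_remove_colour_class[OF fin two proper z(2) e0, folded M_def]
  have nbr: "0 < mg_mult F ends x w" "w \<noteq> x" if "0 < mg_mult (F - M) ends x w" for w
    using removed(4)[OF that] mg_nbr_neq[OF two] by blast+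
  have good_bound: "mg_sigma F ends x w \<le> k + s w" if "0 < mg_mult F ends x w" "w \<noteq> z" for w
    using good that unfolding good_missing_colour_def s_def k_def by blast
  have good_pair: "mg_sigma F ends x w < k + s w \<or> mg_sigma F ends x w' < k + s w'"
    if "0 < mg_mult F ends x w" "0 < mg_mult F ends x w'" "w \<noteq> z" "w' \<noteq> z" "w \<noteq> w'" for w w'
    using good that unfolding good_missing_colour_def s_def k_def by blast
  have "mg_degree F ends x \<le> k" "mg_sigma F ends x z \<le> k + 1"
    using ext z(1) unfolding extension_condition_def k_def by blast+
  then have "1 \<le> k" "mg_sigma (F - M) ends x z \<le> k - 1"
    using removed(1,2) by linarith+
  show "extension_condition (card C - 1) (F - M) ends x"
    unfolding extension_condition_def k_def[symmetric]
  proof (intro conjI allI impI)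
    show "mg_degree (F - M) ends x \<le> k - 1"
      using removed(1) \<open>mg_degree F ends x \<le> k\<close> by linarith
  next
    fix w assume w: "0 < mg_mult (F - M) ends x w"
    show "mg_sigma (F - M) ends x w \<le> k - 1 + 1"
    proof (cases "w = z")
      case False
      then show ?thesis
        using good_bound[OF nbr(1)[OF w] False] removed(3)[OF nbr(2)[OF w] False] \<open>1 \<le> k\<close>
        unfolding s_def by linarith
    qed (use \<open>mg_sigma (F - M) ends x z \<le> k - 1\<close> in simp)
  next
    fix w w' assume w: "0 < mg_mult (F - M) ends x w" and w': "0 < mg_mult (F - M) ends x w'"
      and "w \<noteq> w'"
    show "mg_sigma (F - M) ends x w \<le> k - 1 \<or> mg_sigma (F - M) ends x w' \<le> k - 1"
    proof (cases "w = z \<or> w' = z")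
      case False
      then show ?thesis
        using good_pair[OF nbr(1)[OF w] nbr(1)[OF w'] _ _ \<open>w \<noteq> w'\<close>]
          removed(3)[OF nbr(2)[OF w]] removed(3)[OF nbr(2)[OF w']]
        unfolding s_def by fastforce
    qed (use \<open>mg_sigma (F - M) ends x z \<le> k - 1\<close> in blast)
  qed
qed

lemma proper_colouring_extend_at_vertex:
  assumes "finite F" "\<forall>e\<in>F. card (ends e) = 2" "finite C"
    and "proper_colouring C (edges_avoiding F ends x) ends c"
    and "extension_condition (card C) F ends x"
  shows "\<exists>c'. proper_colouring C F ends c'"
  using assms
proof (induction "mg_degree F ends x" arbitrary: F C c)
  case 0
  then have "{e\<in>F. x \<in> ends e} = {}" unfolding mg_degree_def by simp
  then have "edges_avoiding F ends x = F" by blast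
  then show ?case using "0.prems"(4) by auto
next
  case (Suc n)
  note fin = Suc.prems(1) and two = Suc.prems(2) and ext = Suc.prems(5)
  have "0 < mg_degree F ends x" using Suc.hyps(2) by simp
  then obtain c1 z \<alpha> where c1: "proper_colouring C (edges_avoiding F ends x) ends c1" "\<alpha> \<in> C"
    and good: "good_missing_colour (card C) F ends x c1 z \<alpha>"
    by (rule exists_good_missing_colour[OF fin two Suc.prems(3,4) ext])
  have "0 < mg_mult F ends x z" using good unfolding good_missing_colour_def by blast
  then obtain e0 where e0: "e0 \<in> F" "ends e0 = {x, z}" by (rule mg_mult_posE)
  define M where "M = insert e0 {e\<in>edges_avoiding F ends x. c1 e = \<alpha>}"
  have z_misses: "\<alpha> \<notin> colours_at (edges_avoiding F ends x) ends c1 z"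
    using good unfolding good_missing_colour_def by blast
  have "M \<subseteq> F" unfolding M_def using e0(1) by blast
  have matching: "mg_matching M ends"
    unfolding M_def by (rule colour_class_insert_matching[OF c1(1) z_misses e0(2)])
  have proper': "proper_colouring (C - {\<alpha>}) (edges_avoiding (F - M) ends x) ends c1"
  proof (rule proper_colouring_mono[OF c1(1)])
    show "edges_avoiding (F - M) ends x \<subseteq> edges_avoiding F ends x" by blast
    show "\<forall>e\<in>edges_avoiding (F - M) ends x. c1 e \<in> C - {\<alpha>}"
      using c1(1) unfolding M_def proper_colouring_def by blast
  qed
  have "finite (F - M)" "\<forall>e\<in>F - M. card (ends e) = 2" "finite (C - {\<alpha>})"
    using fin two Suc.prems(3) by auto
  moreover have "n = mg_degree (F - M) ends x"
    using mg_sigma_remove_colour_class(1)[OF fin two c1(1) z_misses e0] Suc.hyps(2)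
    unfolding M_def by simp
  moreover have "extension_condition (card (C - {\<alpha>})) (F - M) ends x"
    using extension_condition_remove_colour_class[OF fin two c1(1) ext good e0] c1(2) Suc.prems(3)
    unfolding M_def by simp
  ultimately obtain c2 where "proper_colouring (C - {\<alpha>}) (F - M) ends c2"
    using Suc.hyps(1)[of "F - M" "C - {\<alpha>}" c1] proper' by blast
  then have "proper_colouring (insert \<alpha> (C - {\<alpha>})) ((F - M) \<union> M) ends
      (\<lambda>e. if e \<in> M then \<alpha> else c2 e)"
    using matching by (rule proper_colouring_add_colour_class) simp
  moreover have "insert \<alpha> (C - {\<alpha>}) = C" "(F - M) \<union> M = F" using c1(2) \<open>M \<subseteq> F\<close> by auto
  ultimately show ?case by auto
qed

section \<open>The parameters \<open>\<Delta>\<^sup>\<mu>\<close> and \<open>G\<^sup>*\<close>\<close>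

lemma mg_degree_plus_mu_le_Delta_mu:
  "finite V \<Longrightarrow> v \<in> V \<Longrightarrow> mg_degree F ends v + mg_mu V F ends v \<le> mg_Delta_mu V F ends"
  unfolding mg_Delta_mu_def by (rule Max_ge) (auto simp: finite_image_set)

lemma mg_mult_le_mu: "finite V \<Longrightarrow> w \<in> V \<Longrightarrow> mg_mult F ends v w \<le> mg_mu V F ends v"
  unfolding mg_mu_def by (rule Max_ge) (auto simp: finite_image_set)

lemma mg_mu_attained:
  assumes "finite V"
  obtains w where "w \<in> V" "mg_mu V F ends v = mg_mult F ends v w" | "mg_mu V F ends v = 0"
proof -
  have "mg_mu V F ends v \<in> insert 0 {mg_mult F ends v w | w. w \<in> V}"
    unfolding mg_mu_def using assms by (intro Max_in) (auto simp: finite_image_set)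
  then show ?thesis using that by blast
qed

lemma mg_Delta_mu_attained:
  assumes "finite V"
  obtains v where "v \<in> V" "mg_Delta_mu V F ends = mg_degree F ends v + mg_mu V F ends v"
    | "mg_Delta_mu V F ends = 0"
proof -
  have "mg_Delta_mu V F ends \<in> insert 0 {mg_degree F ends v + mg_mu V F ends v | v. v \<in> V}"
    unfolding mg_Delta_mu_def using assms by (intro Max_in) (auto simp: finite_image_set)
  then show ?thesis using that by blast
qed

lemma mg_mu_le_degree:
  assumes "finite V" "finite F"
  shows "mg_mu V F ends v \<le> mg_degree F ends v"
proof (cases rule: mg_mu_attained[OF assms(1), where F = F and ends = ends and v = v])
  case (1 w)
  then show ?thesis using mg_mult_le_degree[OF assms(2), of ends v w] by simp
qed simp

lemma mg_mu_mono:
  assumes "F' \<subseteq> F" "finite F" "finite V"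
  shows "mg_mu V F' ends v \<le> mg_mu V F ends v"
proof (cases rule: mg_mu_attained[OF assms(3), where F = F' and ends = ends and v = v])
  case (1 w)
  then have "mg_mu V F' ends v \<le> mg_mult F ends v w" using mg_mult_mono[OF assms(1,2)] by simp
  also have "\<dots> \<le> mg_mu V F ends v" using mg_mult_le_mu[OF assms(3) 1(1)] .
  finally show ?thesis .
qed simp

lemma mg_Delta_mu_mono:
  assumes "F' \<subseteq> F" "finite F" "finite V"
  shows "mg_Delta_mu V F' ends \<le> mg_Delta_mu V F ends"
proof (cases rule: mg_Delta_mu_attained[OF assms(3), where F = F' and ends = ends])
  case (1 v)
  have "mg_degree F' ends v \<le> mg_degree F ends v" "mg_mu V F' ends v \<le> mg_mu V F ends v"
    using mg_degree_mono[OF assms(1,2)] mg_mu_mono[OF assms] by auto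
  then show ?thesis
    using 1(2) mg_degree_plus_mu_le_Delta_mu[OF assms(3) 1(1), of F ends] by linarith
qed simp

lemma mg_star_vertices_mono:
  assumes "F' \<subseteq> F" "finite F" "finite V" "mg_Delta_mu V F' ends = mg_Delta_mu V F ends"
  shows "mg_star_vertices V F' ends \<subseteq> mg_star_vertices V F ends"
proof
  fix v assume "v \<in> mg_star_vertices V F' ends"
  then have "v \<in> V" "mg_degree F' ends v + mg_mu V F' ends v = mg_Delta_mu V F ends"
    using assms(4) unfolding mg_star_vertices_def by auto
  moreover have "mg_degree F' ends v \<le> mg_degree F ends v" "mg_mu V F' ends v \<le> mg_mu V F ends v"
    using mg_degree_mono[OF assms(1,2)] mg_mu_mono[OF assms(1-3)] by auto
  moreover note mg_degree_plus_mu_le_Delta_mu[OF assms(3) \<open>v \<in> V\<close>, of F ends]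
  ultimately show "v \<in> mg_star_vertices V F ends" unfolding mg_star_vertices_def by simp
qed

lemma mg_sigma_le_degree_plus_mu:
  assumes "loopless_multigraph V F ends" "x \<in> V" "0 < mg_mult F ends x w"
  shows "w \<in> V" "mg_sigma F ends x w \<le> mg_degree F ends w + mg_mu V F ends w"
proof -
  obtain e where "e \<in> F" "ends e = {x, w}" using assms(3) by (rule mg_mult_posE)
  then show "w \<in> V" using assms(1) unfolding loopless_multigraph_def by blast
  have "mg_mult F ends x w \<le> mg_mu V F ends w"
    using mg_mult_le_mu[of V x F ends w] assms(1,2) unfolding loopless_multigraph_def
    by (simp add: mg_mult_commute)
  then show "mg_sigma F ends x w \<le> mg_degree F ends w + mg_mu V F ends w"
    unfolding mg_sigma_def by simp
qed

lemma mg_sigma_le_Delta_mu: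
  assumes "loopless_multigraph V F ends" "x \<in> V" "0 < mg_mult F ends x w"
  shows "mg_sigma F ends x w \<le> mg_Delta_mu V F ends"
proof -
  have "finite V" using assms(1) unfolding loopless_multigraph_def by blast
  then show ?thesis
    using mg_sigma_le_degree_plus_mu[OF assms] mg_degree_plus_mu_le_Delta_mu[of V w F ends]
      by linarith
qed

lemma mg_degree_less_Delta_mu:
  assumes lm: "loopless_multigraph V F ends" and "x \<in> V" "0 < mg_degree F ends x"
  shows "mg_degree F ends x < mg_Delta_mu V F ends"
proof -
  have fin: "finite V" "finite F" and two: "\<forall>e\<in>F. card (ends e) = 2"
    using lm unfolding loopless_multigraph_def by auto
  obtain w where w: "0 < mg_mult F ends x w"
    using mg_degree_pos_imp_nbr[OF fin(2) two assms(3)] .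
  then have "0 < mg_mu V F ends x"
    using mg_mult_le_mu[OF fin(1) mg_sigma_le_degree_plus_mu(1)[OF lm assms(2) w]]
      by (rule less_le_trans)
  then show ?thesis using mg_degree_plus_mu_le_Delta_mu[OF fin(1) assms(2), of F ends] by linarith
qed

lemma has_long_cycle_in_mono:
  assumes "S' \<subseteq> S" "F' \<subseteq> F" "finite F" "has_long_cycle_in S' F' ends"
  shows "has_long_cycle_in S F ends"
proof -
  obtain vs where "length vs \<ge> 3" "distinct vs" "set vs \<subseteq> S'"
    and edges: "\<forall>i < length vs. mg_mult F' ends (vs ! i) (vs ! ((i + 1) mod length vs)) > 0"
    using assms(4) unfolding has_long_cycle_in_def by blast
  moreover have "\<forall>i < length vs. mg_mult F ends (vs ! i) (vs ! ((i + 1) mod length vs)) > 0"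
    using edges mg_mult_mono[OF assms(2,3)] by (meson less_le_trans)
  ultimately show ?thesis using assms(1) unfolding has_long_cycle_in_def by blast
qed

lemma has_long_cycle_in_if_path_closes:
  assumes path: "successively (\<lambda>u v. 0 < mg_mult F ends u v) p" "distinct p" "set p \<subseteq> S"
    and j: "2 \<le> j" "j < length p" and closes: "0 < mg_mult F ends (p ! j) (p ! 0)"
  shows "has_long_cycle_in S F ends"
  unfolding has_long_cycle_in_def
proof (intro exI[of _ "take (Suc j) p"] conjI allI impI)
  let ?vs = "take (Suc j) p"
  have len: "length ?vs = Suc j" using j(2) by simp
  show "3 \<le> length ?vs" "distinct ?vs" "set ?vs \<subseteq> S"
    using len j(1) path(2,3) set_take_subset[of "Suc j" p] by auto
  fix i assume "i < length ?vs"
  show "0 < mg_mult F ends (?vs ! i) (?vs ! ((i + 1) mod length ?vs))"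
  proof (cases "i < j")
    case True
    then show ?thesis using successively_nth[OF path(1), of i] len j(2) by simp
  next
    case False
    then have "i = j" using \<open>i < length ?vs\<close> len by simp
    then show ?thesis using closes len by simp
  qed
qed

lemma exists_leaf_if_no_long_cycle:
  assumes "finite S" "S \<noteq> {}" and no_cycle: "\<not> has_long_cycle_in S F ends"
    and loopless: "\<And>v. mg_mult F ends v v = 0"
  obtains x where "x \<in> S"
    "\<And>u u'. u \<in> S \<Longrightarrow> u' \<in> S \<Longrightarrow> 0 < mg_mult F ends x u \<Longrightarrow> 0 < mg_mult F ends x u' \<Longrightarrow> u = u'"
proof -
  define R where "R = (\<lambda>u v. 0 < mg_mult F ends u v)"
  have R_sym: "R u v \<Longrightarrow> R v u" for u v unfolding R_def by (simp add: mg_mult_commute)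
  define P where "P = (\<lambda>p. successively R p \<and> distinct p \<and> set p \<subseteq> S \<and> p \<noteq> [])"
  obtain s where "s \<in> S" using assms(2) by blast
  then have "P [s]" unfolding P_def by simp
  moreover have "\<forall>q. P q \<longrightarrow> length q < Suc (card S)"
    unfolding P_def using assms(1) by (metis card_mono distinct_card less_Suc_eq_le)
  ultimately obtain p where p: "P p" and longest: "\<And>q. P q \<Longrightarrow> length q \<le> length p"
    using ex_has_greatest_nat[of P "[s]" length] by blast
  then obtain a where a: "hd p = a" "a \<in> S" unfolding P_def by (simp add: subset_iff)
  have p0: "p ! 0 = a" using p a(1) unfolding P_def by (simp add: hd_conv_nth)
  text \<open>By maximality of \<open>p\<close>, every neighbour of its first vertex lies on it.\<close>
  have on_path: "\<exists>j. j < length p \<and> p ! j = u \<and> 0 < j" if "u \<in> S" "R a u" for u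
  proof -
    have "u \<in> set p"
    proof (rule ccontr)
      assume "u \<notin> set p"
      then have "P (u # p)" using p that R_sym a(1) unfolding P_def by (cases p) auto
      then show False using longest[of "u # p"] by simp
    qed
    then obtain j where j: "j < length p" "p ! j = u" by (meson in_set_conv_nth)
    moreover have "j \<noteq> 0"
    proof
      assume "j = 0"
      then have "0 < mg_mult F ends a a" using that(2) j(2) p0 unfolding R_def by simp
      then show False using loopless[of a] by simp
    qed
    ultimately show ?thesis by blast
  qed
  show ?thesis
  proof (rule that[OF a(2)])
    fix u u' assume "u \<in> S" "u' \<in> S" "0 < mg_mult F ends a u" "0 < mg_mult F ends a u'"
    then obtain j j' where j: "j < length p" "p ! j = u" "0 < j"
      and j': "j' < length p" "p ! j' = u'" "0 < j'"
      using on_path unfolding R_def by blast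
    show "u = u'"
    proof (rule ccontr)
      assume "u \<noteq> u'"
      then have "j \<noteq> j'" using j(2) j'(2) by blast
      then obtain i where "2 \<le> i" "i < length p" "R a (p ! i)"
        using j j' \<open>0 < mg_mult F ends a u\<close> \<open>0 < mg_mult F ends a u'\<close> unfolding R_def
        by (metis One_nat_def Suc_1 Suc_leI le_neq_implies_less)
      moreover have "0 < mg_mult F ends (p ! i) (p ! 0)"
        using R_sym[OF \<open>R a (p ! i)\<close>] p0 unfolding R_def by simp
      ultimately have "has_long_cycle_in S F ends"
        using p has_long_cycle_in_if_path_closes unfolding P_def R_def by blast
      then show False using no_cycle by blast
    qed
  qed
qed

text \<open>The hypothesis of the theorem, weakened so that it passes to subgraphs: deleting edges
  may lower \<open>\<Delta>\<^sup>\<mu>\<close>, and then \<open>G\<^sup>*\<close> is no longer constrained.\<close>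
definition star_forest_condition :: "nat \<Rightarrow> 'v set \<Rightarrow> 'e set \<Rightarrow> ('e \<Rightarrow> 'v set) \<Rightarrow> bool" where
  "star_forest_condition k V F ends \<longleftrightarrow> mg_Delta_mu V F ends \<le> k \<or>
     (mg_Delta_mu V F ends = k + 1 \<and> \<not> has_long_cycle_in (mg_star_vertices V F ends) F ends)"

lemma star_forest_condition_mono:
  assumes "F' \<subseteq> F" "finite F" "finite V" "star_forest_condition k V F ends"
  shows "star_forest_condition k V F' ends"
proof (cases "mg_Delta_mu V F' ends \<le> k")
  case False
  then have Delta_eq: "mg_Delta_mu V F' ends = mg_Delta_mu V F ends" "mg_Delta_mu V F ends = k + 1"
    using mg_Delta_mu_mono[OF assms(1-3), of ends] assms(4)
      unfolding star_forest_condition_def by linarith+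
  then have "\<not> has_long_cycle_in (mg_star_vertices V F ends) F ends"
    using assms(4) unfolding star_forest_condition_def by simp
  then have "\<not> has_long_cycle_in (mg_star_vertices V F' ends) F' ends"
    using has_long_cycle_in_mono[OF mg_star_vertices_mono[OF assms(1-3) Delta_eq(1)] assms(1,2)]
      by blast
  then show ?thesis using Delta_eq unfolding star_forest_condition_def by simp
qed (simp add: star_forest_condition_def)

lemma extension_condition_if_Delta_mu_le:
  assumes lm: "loopless_multigraph V F ends" and x: "x \<in> V" "0 < mg_degree F ends x"
    and Delta: "mg_Delta_mu V F ends \<le> k + 1"
    and pairs: "\<And>w w'. 0 < mg_mult F ends x w \<Longrightarrow> 0 < mg_mult F ends x w' \<Longrightarrow> w \<noteq> w' \<Longrightarrow>
       mg_sigma F ends x w \<le> k \<or> mg_sigma F ends x w' \<le> k"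
  shows "extension_condition k F ends x"
  unfolding extension_condition_def
proof (intro conjI allI impI)
  show "mg_degree F ends x \<le> k" using mg_degree_less_Delta_mu[OF lm x] Delta by linarith
  show "mg_sigma F ends x w \<le> k + 1" if "0 < mg_mult F ends x w" for w
    using mg_sigma_le_Delta_mu[OF lm x(1) that] Delta by linarith
qed (use pairs in blast)

text \<open>If \<open>\<Delta>\<^sup>\<mu> = k + 1\<close>, the neighbours \<open>w\<close> with \<open>\<sigma>(w) = k + 1\<close> lie in \<open>G\<^sup>*\<close>.\<close>
lemma extension_condition_at_star_leaf:
  assumes lm: "loopless_multigraph V F ends" and Delta: "mg_Delta_mu V F ends = k + 1"
    and x: "x \<in> mg_star_vertices V F ends"
    and leaf: "\<And>u u'. u \<in> mg_star_vertices V F ends \<Longrightarrow> u' \<in> mg_star_vertices V F ends \<Longrightarrow>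
        0 < mg_mult F ends x u \<Longrightarrow> 0 < mg_mult F ends x u' \<Longrightarrow> u = u'"
  shows "0 < mg_degree F ends x" "extension_condition k F ends x"
proof -
  have fin: "finite V" "finite F" using lm unfolding loopless_multigraph_def by auto
  have "x \<in> V" "mg_degree F ends x + mg_mu V F ends x = k + 1"
    using x Delta unfolding mg_star_vertices_def by simp_all
  then show "0 < mg_degree F ends x" using mg_mu_le_degree[OF fin, of ends x] by linarith
  have in_star: "w \<in> mg_star_vertices V F ends"
    if "0 < mg_mult F ends x w" "\<not> mg_sigma F ends x w \<le> k" for w
  proof -
    have "w \<in> V" "mg_sigma F ends x w \<le> mg_degree F ends w + mg_mu V F ends w"
      using mg_sigma_le_degree_plus_mu[OF lm \<open>x \<in> V\<close> that(1)] by auto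
    moreover note mg_degree_plus_mu_le_Delta_mu[OF fin(1) \<open>w \<in> V\<close>, of F ends]
    ultimately show ?thesis using that(2) Delta unfolding mg_star_vertices_def by simp
  qed
  show "extension_condition k F ends x"
    using extension_condition_if_Delta_mu_le[OF lm \<open>x \<in> V\<close> \<open>0 < mg_degree F ends x\<close>]
      Delta in_star leaf
    by (metis le_refl)
qed

lemma exists_extension_vertex:
  assumes lm: "loopless_multigraph V F ends" and "F \<noteq> {}"
    and cond: "star_forest_condition k V F ends"
  obtains x where "x \<in> V" "0 < mg_degree F ends x" "extension_condition k F ends x"
proof -
  have fin: "finite V" "finite F" and two: "\<forall>e\<in>F. card (ends e) = 2"
    using lm unfolding loopless_multigraph_def by auto
  consider (small) "mg_Delta_mu V F ends \<le> k"
    | (star) "mg_Delta_mu V F ends = k + 1" "\<not> has_long_cycle_in (mg_star_vertices V F ends) F ends"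
    using cond unfolding star_forest_condition_def by blast
  then show ?thesis
  proof cases
    case small
    obtain e where "e \<in> F" using \<open>F \<noteq> {}\<close> by blast
    then have "card (ends e) = 2" "ends e \<subseteq> V" using lm unfolding loopless_multigraph_def by auto
    then obtain a b where "ends e = {a, b}" "a \<in> V" by (auto simp: card_2_iff)
    then have "0 < mg_degree F ends a" using \<open>e \<in> F\<close> fin(2) unfolding mg_degree_def
      by (auto simp: card_gt_0_iff)
    moreover have "extension_condition k F ends a"
    proof (rule extension_condition_if_Delta_mu_le[OF lm \<open>a \<in> V\<close> calculation])
      show "mg_Delta_mu V F ends \<le> k + 1" using small by simp
      fix w w' assume "0 < mg_mult F ends a w"
      then show "mg_sigma F ends a w \<le> k \<or> mg_sigma F ends a w' \<le> k"
        using mg_sigma_le_Delta_mu[OF lm \<open>a \<in> V\<close> \<open>0 < mg_mult F ends a w\<close>] small by linarith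
    qed
    ultimately show ?thesis using that \<open>a \<in> V\<close> by blast
  next
    case star
    define S where "S = mg_star_vertices V F ends"
    obtain v where "v \<in> V" "mg_Delta_mu V F ends = mg_degree F ends v + mg_mu V F ends v"
    proof (cases rule: mg_Delta_mu_attained[OF fin(1), of F ends])
      case (1 v)
      then show ?thesis using that by blast
    qed (use star(1) in simp)
    then have "v \<in> S" unfolding S_def mg_star_vertices_def by simp
    then have "S \<noteq> {}" by blast
    moreover have "finite S" using fin(1) unfolding S_def mg_star_vertices_def by simp
    ultimately obtain x where "x \<in> S" and leaf: "\<And>u u'. u \<in> S \<Longrightarrow> u' \<in> S \<Longrightarrow>
        0 < mg_mult F ends x u \<Longrightarrow> 0 < mg_mult F ends x u' \<Longrightarrow> u = u'"
      using exists_leaf_if_no_long_cycle[OF _ _ star(2)[folded S_def] mg_mult_self[OF two]] by blast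
    then have "x \<in> V" unfolding S_def mg_star_vertices_def by simp
    then show ?thesis
      using that
        extension_condition_at_star_leaf[OF lm star(1) \<open>x \<in> S\<close>[unfolded S_def] leaf[unfolded S_def]]
      by blast
  qed
qed

lemma k_edge_colorable_if_star_forest_condition:
  assumes "loopless_multigraph V F ends" "star_forest_condition k V F ends"
  shows "k_edge_colorable k F ends"
  using assms
proof (induction "card F" arbitrary: F rule: less_induct)
  case less
  have fin: "finite V" "finite F" and two: "\<forall>e\<in>F. card (ends e) = 2"
    using less.prems(1) unfolding loopless_multigraph_def by auto
  show ?case
  proof (cases "F = {}")
    case True
    then show ?thesis unfolding k_edge_colorable_def by simp
  next
    case False
    obtain x where x: "x \<in> V" "0 < mg_degree F ends x" "extension_condition k F ends x"
      using exists_extension_vertex[OF less.prems(1) False less.prems(2)] .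
    have "{e\<in>F. x \<in> ends e} \<noteq> {}"
      using x(2) unfolding mg_degree_def by (rule card_gt_0_iff[THEN iffD1, THEN conjunct1])
    then have "edges_avoiding F ends x \<subset> F" by blast
    then have "card (edges_avoiding F ends x) < card F"
      using fin(2) by (rule psubset_card_mono[rotated])
    moreover have "loopless_multigraph V (edges_avoiding F ends x) ends"
      using less.prems(1) unfolding loopless_multigraph_def by simp
    moreover have "star_forest_condition k V (edges_avoiding F ends x) ends"
      using star_forest_condition_mono[OF _ fin(2,1) less.prems(2)] by simp
    ultimately have "k_edge_colorable k (edges_avoiding F ends x) ends" by (rule less.hyps)
    then obtain c where c: "proper_colouring {1..k} (edges_avoiding F ends x) ends c"
      unfolding k_edge_colorable_iff_proper_colouring ..
    have "extension_condition (card {1..k}) F ends x" using x(3) by simp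
    then show ?thesis
      unfolding k_edge_colorable_iff_proper_colouring
      by (rule proper_colouring_extend_at_vertex[OF fin(2) two _ c, rotated]) simp
  qed
qed

theorem mainTheorem5:
  fixes V :: "'v set" and E :: "'e set" and ends :: "'e \<Rightarrow> 'v set" and k :: nat
  assumes "loopless_multigraph V E ends"
    and "k \<ge> 1"
    and "int k \<ge> int (mg_Delta_mu V E ends) - 1"
    and "\<not> has_long_cycle_in (mg_star_vertices V E ends) E ends"
  shows "k_edge_colorable k E ends"
proof -
  have "mg_Delta_mu V E ends \<le> k \<or> mg_Delta_mu V E ends = k + 1" using assms(3) by linarith
  then have "star_forest_condition k V E ends"
    using assms(4) unfolding star_forest_condition_def by blast
  then show ?thesis by (rule k_edge_colorable_if_star_forest_condition[OF assms(1)])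
qed

end
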